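(* Let $V,W$ be $d$-dimensional real vector spaces, $1\le k\le d-1$, and $A,B\in\operatorname{Hom}(V,W)$ with $\bigwedge^kA=\bigwedge^kB$ and $\operatorname{rank}A>k$. Then $A=\pm B$. If $k$ is odd, then $A=B$.
   Context: $\bigwedge^kA:\bigwedge^kV\to\bigwedge^kW$ is defined by $v_1\wedge\dots\wedge v_k\mapsto Av_1\wedge\dots\wedge Av_k$. *)

theory Defs
  imports "HOL-Analysis.Analysis" "HOL-Combinatorics.Permutations"
begin

text \<open>The decomposable k-vector v_0 wedge ... wedge v_(k-1) of vectors in real^'n,
  represented (faithfully) as the corresponding alternating tensor in the k-fold
  tensor power: its coefficient at the basis tensor e_(j 0) x ... x e_(j (k-1))
  is det [ (v i) $ (j l) ]_(i,l<k), i.e. the antisymmetrisation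
  sum over permutations p of sign p * prod_i (v i) $ (j (p i)).\<close>
definition wedge :: "nat \<Rightarrow> (nat \<Rightarrow> real^'n) \<Rightarrow> ((nat \<Rightarrow> 'n) \<Rightarrow> real)" where
  "wedge k v = (\<lambda>j. \<Sum>p\<in>{p. p permutes {..<k}}. of_int (sign p) * (\<Prod>i<k. v i $ j (p i)))"

text \<open>Equality of the induced maps on k-th exterior powers: since the k-th exterior
  power of V is spanned by decomposable k-vectors, the linear maps
  wedge^k A and wedge^k B agree iff they agree on every v_1 wedge ... wedge v_k.\<close>
definition ext_pow_eq :: "nat \<Rightarrow> real^'m^'n \<Rightarrow> real^'m^'n \<Rightarrow> bool" where
  "ext_pow_eq k A B \<longleftrightarrow>
     (\<forall>v :: nat \<Rightarrow> real^'m. wedge k (\<lambda>i. A *v v i) = wedge k (\<lambda>i. B *v v i))"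

end

theory Submission
  imports Defs Jordan_Normal_Form.Determinant
begin

text \<open>The hypothesis on the k-th exterior powers says that all k-by-k minors
  det [(A w_i)_(rho l)] and det [(B w_i)_(rho l)] agree. Since rank A > k there are rows
  R_0, ..., R_k and vectors V_0, ..., V_k with (A V_i)_(R l) = delta_il. The matrix
  N = [(B V_i)_(R l)] then has the cofactors of the identity, so N = c I, and a k-by-k
  minor gives c^k = 1. Bordering k - 1 of the frame vectors and rows by an arbitrary
  vector x and row r produces triangular minors with determinants (A x)_r and
  c^(k-1) (B x)_r; after projecting x off the frame this gives B = c A. Hence c = 1 or
  c = -1, and c = -1 forces k to be even.\<close>

lemma wedge_eq_det:
  "wedge k w j = Determinant.det (Matrix.mat k k (\<lambda>(i,l). w i $ j l))"
  unfolding wedge_def Determinant.det_def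
  by (auto simp: atLeast0LessThan permutes_in_image intro!: sum.cong prod.cong)

definition image_minor :: "nat \<Rightarrow> real^'m^'n \<Rightarrow> (nat \<Rightarrow> real^'m) \<Rightarrow> (nat \<Rightarrow> 'n) \<Rightarrow> real mat" where
  "image_minor k M w \<rho> = Matrix.mat k k (\<lambda>(i,l). (M *v w i) $ \<rho> l)"

lemma ext_pow_eq_iff_det_image_minor:
  "ext_pow_eq k A B \<longleftrightarrow>
     (\<forall>w \<rho>. Determinant.det (image_minor k A w \<rho>) = Determinant.det (image_minor k B w \<rho>))"
  unfolding ext_pow_eq_def image_minor_def fun_eq_iff wedge_eq_det by blast

lemma det_bordered_scalar:
  fixes f :: "nat \<Rightarrow> nat \<Rightarrow> 'a :: comm_ring_1"
  assumes diag: "\<And>i l. i < m \<Longrightarrow> l < m \<Longrightarrow> f i l = (if i = l then d else 0)"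
    and border: "(\<forall>l<m. f m l = 0) \<or> (\<forall>i<m. f i m = 0)"
  shows "Determinant.det (Matrix.mat (Suc m) (Suc m) (\<lambda>(i,l). f i l)) = d ^ m * f m m"
proof -
  have upper: "Determinant.det (Matrix.mat (Suc m) (Suc m) (\<lambda>(i,l). g i l)) = d ^ m * g m m"
    if "\<And>i l. i < m \<Longrightarrow> l < m \<Longrightarrow> g i l = (if i = l then d else 0)" "\<forall>l<m. g m l = 0"
    for g :: "nat \<Rightarrow> nat \<Rightarrow> 'a"
  proof -
    let ?M = "Matrix.mat (Suc m) (Suc m) (\<lambda>(i,l). g i l)"
    have "upper_triangular ?M"
      unfolding upper_triangular_def using that by (auto simp: less_Suc_eq)
    then have "Determinant.det ?M = prod_list (diag_mat ?M)"
      by (rule det_upper_triangular[of _ "Suc m"]) auto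
    also have "diag_mat ?M = map (\<lambda>i. g i i) [0..<Suc m]"
      by (simp add: diag_mat_def)
    also have "prod_list \<dots> = (\<Prod>i<Suc m. g i i)"
      by (metis atLeast_upt distinct_upt prod.distinct_set_conv_list)
    also have "\<dots> = d ^ m * g m m"
      using that(1) by simp
    finally show ?thesis .
  qed
  from border show ?thesis
  proof
    assume "\<forall>i<m. f i m = 0"
    then have "Determinant.det (Matrix.mat (Suc m) (Suc m) (\<lambda>(i,l). f l i)) = d ^ m * f m m"
      using diag by (intro upper) auto
    moreover have "transpose_mat (Matrix.mat (Suc m) (Suc m) (\<lambda>(i,l). f i l))
        = Matrix.mat (Suc m) (Suc m) (\<lambda>(i,l). f l i)"
      by (rule eq_matI) auto
    ultimately show ?thesis
      by (metis det_transpose mat_carrier)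
  qed (use diag upper in blast)
qed

lemma eq_scalar_if_cofactors_one:
  fixes N :: "'a :: comm_ring_1 mat"
  assumes N: "N \<in> carrier_mat n n"
    and cof: "\<And>i j. i < n \<Longrightarrow> j < n \<Longrightarrow> cofactor N i j = cofactor (1\<^sub>m n) i j"
  shows "N = Determinant.det N \<cdot>\<^sub>m 1\<^sub>m n"
proof -
  have "adj_mat N = adj_mat (1\<^sub>m n)"
    using N cof by (auto intro!: eq_matI simp: adj_mat_def)
  also have "\<dots> = 1\<^sub>m n * adj_mat (1\<^sub>m n)"
    by (metis adj_mat(1) left_mult_one_mat one_carrier_mat)
  also have "\<dots> = 1 \<cdot>\<^sub>m 1\<^sub>m n"
    using adj_mat(2)[of "1\<^sub>m n" n] by simp
  also have "\<dots> = 1\<^sub>m n"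
    by (rule eq_matI) auto
  finally have "adj_mat N = 1\<^sub>m n" .
  then show ?thesis
    using adj_mat(2)[OF N] N by simp
qed

lemma obtain_dual_frame:
  fixes A :: "real^'m^'n"
  assumes "p \<le> rank A"
  obtains R V where "\<And>i l. i < p \<Longrightarrow> l < p \<Longrightarrow> (A *v V i) $ R l = (if i = l then 1 else 0)"
proof -
  obtain Bs where Bs: "Bs \<subseteq> Finite_Cartesian_Product.rows A" "independent Bs" "card Bs = dim (Finite_Cartesian_Product.rows A)"
    by (rule basis_exists)
  obtain C where C: "C \<subseteq> Bs" "card C = p"
    using assms Bs(3) by (metis obtain_subset_with_card_n row_rank_def)
  have indC: "independent C"
    using Bs(2) C(1) independent_mono by blast
  then obtain h where h: "bij_betw h {..<p} C"
    using C(2) by (metis card_lessThan finite_same_card_bij finite_lessThan independent_imp_finite)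
  have "\<exists>r. h l = A $ r" if "l < p" for l
    using h that C(1) Bs(1) bij_betwE
    by (fastforce simp: Finite_Cartesian_Product.rows_def Finite_Cartesian_Product.row_def vec_lambda_eta)
  then obtain R where R: "\<And>l. l < p \<Longrightarrow> h l = A $ R l"
    by metis
  have "\<exists>g. linear g \<and> (\<forall>x\<in>C. g x = (if x = h i then 1 else (0::real)))" for i
    by (rule linear_independent_extend[OF indC])
  then obtain g :: "nat \<Rightarrow> real^'m \<Rightarrow> real"
    where g: "\<And>i. linear (g i)" "\<And>i x. x \<in> C \<Longrightarrow> g i x = (if x = h i then 1 else 0)"
    by metis
  show ?thesis
  proof
    fix i l assume il: "i < p" "l < p"
    have "(A *v adjoint (g i) 1) $ R l = h l \<bullet> adjoint (g i) 1"
      by (simp add: matrix_vector_mul_component R il)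
    also have "\<dots> = g i (h l)"
      by (simp add: adjoint_works[OF g(1)])
    also have "\<dots> = (if i = l then 1 else 0)"
      using g(2) h il bij_betwE[OF h] bij_betw_imp_inj_on[OF h] by (auto dest: inj_onD)
    finally show "(A *v adjoint (g i) 1) $ R l = (if i = l then 1 else 0)" .
  qed
qed

locale equal_image_minors =
  fixes k :: nat and A B :: "real^'m^'n"
  assumes det_image_minor_eq:
    "\<And>w \<rho>. Determinant.det (image_minor k A w \<rho>) = Determinant.det (image_minor k B w \<rho>)"
begin

lemma frame_image_scalar:
  assumes frame: "\<And>i l. i \<le> k \<Longrightarrow> l \<le> k \<Longrightarrow> (A *v V i) $ R l = (if i = l then 1 else 0)"
  obtains c where "c ^ k = 1"
    and "\<And>i l. i \<le> k \<Longrightarrow> l \<le> k \<Longrightarrow> (B *v V i) $ R l = (if i = l then c else 0)"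
proof -
  define N where "N = image_minor (Suc k) B V R"
  have N: "N \<in> carrier_mat (Suc k) (Suc k)"
    by (simp add: N_def image_minor_def)
  have A_one: "image_minor (Suc k) A V R = 1\<^sub>m (Suc k)"
    by (rule eq_matI) (auto simp: image_minor_def frame)
  have "cofactor N i j = cofactor (1\<^sub>m (Suc k)) i j" if "i < Suc k" "j < Suc k" for i j
  proof -
    have "mat_delete (image_minor (Suc k) M V R) i j
        = image_minor k M (V \<circ> insert_index i) (R \<circ> insert_index j)" for M :: "real^'m^'n"
      by (rule eq_matI) (auto simp: mat_delete_def image_minor_def insert_index_def)
    then show ?thesis
      unfolding cofactor_def N_def A_one[symmetric] by (simp add: det_image_minor_eq)
  qed
  then have N_scalar: "N = Determinant.det N \<cdot>\<^sub>m 1\<^sub>m (Suc k)"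
    by (rule eq_scalar_if_cofactors_one[OF N])
  have B_frame: "(B *v V i) $ R l = (if i = l then Determinant.det N else 0)"
    if "i \<le> k" "l \<le> k" for i l
  proof -
    have "(B *v V i) $ R l = N $$ (i, l)"
      using that by (simp add: N_def image_minor_def)
    also have "\<dots> = (if i = l then Determinant.det N else 0)"
      using that by (subst N_scalar) simp
    finally show ?thesis .
  qed
  have "image_minor k B V R = Determinant.det N \<cdot>\<^sub>m 1\<^sub>m k"
    by (rule eq_matI) (auto simp: image_minor_def B_frame)
  moreover have "image_minor k A V R = 1\<^sub>m k"
    by (rule eq_matI) (auto simp: image_minor_def frame)
  ultimately have "Determinant.det N ^ k = 1"
    using det_image_minor_eq[of V R] by (simp add: det_smult)
  then show ?thesis
    using B_frame that by blast
qed

end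

locale equal_image_minors_on_frame = equal_image_minors +
  fixes R :: "nat \<Rightarrow> 'n::finite" and V :: "nat \<Rightarrow> real^'m::finite" and c :: real
  assumes k_pos: "1 \<le> k"
    and frame_A: "\<And>i l. i \<le> k \<Longrightarrow> l \<le> k \<Longrightarrow> (A *v V i) $ R l = (if i = l then 1 else 0)"
    and frame_B: "\<And>i l. i \<le> k \<Longrightarrow> l \<le> k \<Longrightarrow> (B *v V i) $ R l = (if i = l then c else 0)"
    and c_pow: "c ^ k = 1"
begin

lemma scaled_entry_if_bordered:
  assumes \<sigma>: "\<sigma> ` {..<k-1} \<subseteq> {..k}" "inj_on \<sigma> {..<k-1}"
    and border: "(\<forall>t<k-1. (A *v x) $ R (\<sigma> t) = 0 \<and> (B *v x) $ R (\<sigma> t) = 0)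
      \<or> (\<forall>t<k-1. (A *v V (\<sigma> t)) $ r = 0 \<and> (B *v V (\<sigma> t)) $ r = 0)"
  shows "(B *v x) $ r = c * (A *v x) $ r"
proof -
  obtain m where k: "k = Suc m"
    using k_pos by (cases k) auto
  define w where "w t = (if t < m then V (\<sigma> t) else x)" for t
  define \<rho> where "\<rho> t = (if t < m then R (\<sigma> t) else r)" for t
  have \<sigma>_eq: "\<sigma> i = \<sigma> l \<longleftrightarrow> i = l" if "i < m" "l < m" for i l
    using \<sigma>(2) that k by (auto dest: inj_onD)
  have \<sigma>_le: "\<sigma> i \<le> k" if "i < m" for i
    using \<sigma>(1) that k by auto
  have A_\<sigma>: "(A *v V (\<sigma> i)) $ R (\<sigma> l) = (if i = l then 1 else 0)"
    and B_\<sigma>: "(B *v V (\<sigma> i)) $ R (\<sigma> l) = (if i = l then c else 0)" if "i < m" "l < m" for i l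
    using frame_A frame_B \<sigma>_le \<sigma>_eq that by auto
  note border_m = border[unfolded k diff_Suc_1]
  have "Determinant.det (image_minor k A w \<rho>) = 1 ^ m * (A *v w m) $ \<rho> m"
    unfolding image_minor_def k
    by (rule det_bordered_scalar) (use border_m in \<open>auto simp: w_def \<rho>_def A_\<sigma>\<close>)
  moreover have "Determinant.det (image_minor k B w \<rho>) = c ^ m * (B *v w m) $ \<rho> m"
    unfolding image_minor_def k
    by (rule det_bordered_scalar) (use border_m in \<open>auto simp: w_def \<rho>_def B_\<sigma>\<close>)
  ultimately have "(A *v x) $ r = c ^ m * (B *v x) $ r"
    using det_image_minor_eq by (simp add: w_def \<rho>_def)
  then have "c * (A *v x) $ r = c ^ k * (B *v x) $ r"
    by (simp add: k)
  then show ?thesis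
    by (simp add: c_pow)
qed

lemma scaled_entry_frame_row:
  assumes "a \<le> k"
  shows "(B *v x) $ R a = c * (A *v x) $ R a"
  by (rule scaled_entry_if_bordered[of "insert_index a"])
    (use assms in \<open>auto simp: insert_index_def frame_A frame_B inj_on_def\<close>)

lemma scaled_entry_frame_vector:
  assumes "s \<le> k"
  shows "(B *v V s) $ r = c * (A *v V s) $ r"
  by (rule scaled_entry_if_bordered[of "insert_index s"])
    (use assms in \<open>auto simp: insert_index_def frame_A frame_B inj_on_def\<close>)

lemma scaled_entry:
  "(B *v x) $ r = c * (A *v x) $ r"
proof -
  define y where "y = (\<Sum>s<k-1. (A *v x) $ R s *\<^sub>R V s)"
  have image_y: "M *v y = (\<Sum>s<k-1. (A *v x) $ R s *\<^sub>R (M *v V s))" for M :: "real^'m^'n"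
    by (simp add: y_def Cartesian_Space.vec.sum matrix_vector_mult_scaleR)
  have A_x_y: "(A *v (x - y)) $ R t = 0" if "t < k-1" for t
  proof -
    have "(A *v y) $ R t = (\<Sum>s<k-1. (A *v x) $ R s * (A *v V s) $ R t)"
      by (simp add: image_y sum_component)
    also have "\<dots> = (\<Sum>s<k-1. if s = t then (A *v x) $ R t else 0)"
      by (rule sum.cong) (use that in \<open>auto simp: frame_A\<close>)
    also have "\<dots> = (A *v x) $ R t"
      using that by simp
    finally show ?thesis
      by (simp add: matrix_vector_mult_diff_distrib)
  qed
  \<comment> \<open>x - y has vanishing frame coordinates under A, hence under B as well\<close>
  have "(B *v (x - y)) $ r = c * (A *v (x - y)) $ r"
    by (rule scaled_entry_if_bordered[of id])
      (use A_x_y scaled_entry_frame_row[of _ "x - y"] in auto)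
  moreover have "(B *v y) $ r = c * (A *v y) $ r"
    by (simp add: image_y sum_component sum_distrib_left scaled_entry_frame_vector
        mult.left_commute)
  ultimately show ?thesis
    by (simp add: matrix_vector_mult_diff_distrib algebra_simps)
qed

lemma B_eq_scaleR: "B = c *\<^sub>R A"
  unfolding matrix_eq
  by (simp add: Finite_Cartesian_Product.vec_eq_iff scaled_entry
      flip: scaleR_matrix_vector_assoc)

end

theorem mainTheorem12:
  fixes A B :: "real^'m^'n" and k :: nat
  assumes "CARD('m) = CARD('n)"
    and "1 \<le> k" and "k \<le> CARD('n) - 1"
    and "ext_pow_eq k A B"
    and "rank A > k"
  shows "(A = B \<or> A = - B) \<and> (odd k \<longrightarrow> A = B)"
proof -
  interpret equal_image_minors k A B
    using assms(4) by unfold_locales (simp add: ext_pow_eq_iff_det_image_minor)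
  obtain R V
    where frame: "\<And>i l. i < Suc k \<Longrightarrow> l < Suc k \<Longrightarrow> (A *v V i) $ R l = (if i = l then 1 else 0)"
    by (rule obtain_dual_frame[of "Suc k" A]) (use assms(5) in auto)
  obtain c where c: "c ^ k = 1"
    "\<And>i l. i \<le> k \<Longrightarrow> l \<le> k \<Longrightarrow> (B *v V i) $ R l = (if i = l then c else 0)"
    using frame_image_scalar[OF frame[unfolded less_Suc_eq_le]] by blast
  interpret equal_image_minors_on_frame k A B R V c
    using assms(2) frame c by unfold_locales (auto simp: less_Suc_eq_le)
  have "c = 1 \<or> c = -1"
    using power_eq_1_iff[OF c(1)] assms(2) by auto
  then show ?thesis
  proof
    assume "c = -1"
    with c(1) have "even k"
      by (metis neg_one_odd_power one_neq_neg_one)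
    moreover have "A = - B"
      using B_eq_scaleR \<open>c = -1\<close> by simp
    ultimately show ?thesis by simp
  qed (simp add: B_eq_scaleR)
qed

end
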